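(* Let $(\mathcal B,<)$ be a monoidal poset, $B\in\mathcal B$, and $i\sim j$ nodes with $r_ir_jB=r_jB$. If $r_iB<B$ and $r_jB<B$, then $\alpha_i+\alpha_j\in B$.
   Context: Setting: $M$ is a spherical simply laced Coxeter diagram with nodes $1,\dots,n$ ($i\sim j$: distinct adjacent nodes; $i\not\sim j$ otherwise); $W$ its Weyl group with positive roots $\Phi^+$, fundamental roots $\alpha_i$, reflections $r_i$, inner product with $(\alpha_i,\alpha_i)=2$, $(\alpha_i,\alpha_j)=-1$ if $i\sim j$, $0$ otherwise; height $\mathrm{ht}(\sum a_k\alpha_k)=\sum a_k$. For a set $B$ of mutually orthogonal positive roots, $wB=\Phi^+\cap\{\pm w\beta:\beta\in B\}$. A $W$-orbit $\mathcal B$ of such sets is admissible if for every $B\in\mathcal B$, all nodes $i\not\sim j$ and root $\gamma$ with $\gamma,\gamma-\alpha_i+\alpha_j\in B$, $r_iB=r_jB$. For $B,C\in\mathcal B$ write $B\prec C$ if $B\ne C$ and the minimal height of an element of $B\setminus C$ is strictly smaller than the minimal height of an element of $C\setminus B$. For admissible $\mathcal B$, the monoidal poset $(\mathcal B,<)$ is $\mathcal B$ with the partial order $<$ given by the transitive closure of the relation $\{(B,r_jB): B\in\mathcal B,\ j\text{ a node},\ B\prec r_jB\}$; $>$ denotes the reverse relation. *)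

theory Defs
  imports Main "HOL-Library.Function_Algebras"
begin

text \<open>A simply laced Coxeter diagram on nodes 1..n is given by an adjacency relation
  adj (symmetric, irreflexive, supported on the nodes). Vectors of the root lattice
  are coefficient functions nat => int w.r.t. the fundamental roots alpha_1..alpha_n.\<close>

definition nodes :: "nat \<Rightarrow> nat set" where
  "nodes n = {1..n}"

definition diagram :: "nat \<Rightarrow> (nat \<Rightarrow> nat \<Rightarrow> bool) \<Rightarrow> bool" where
  "diagram n adj \<longleftrightarrow> (\<forall>i j. adj i j \<longrightarrow> adj j i) \<and> (\<forall>i. \<not> adj i i)
     \<and> (\<forall>i j. adj i j \<longrightarrow> i \<in> nodes n \<and> j \<in> nodes n)"

definition alpha :: "nat \<Rightarrow> nat \<Rightarrow> int" where
  "alpha i = (\<lambda>k. if k = i then 1 else 0)"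

definition cartan :: "(nat \<Rightarrow> nat \<Rightarrow> bool) \<Rightarrow> nat \<Rightarrow> nat \<Rightarrow> int" where
  "cartan adj k l = (if k = l then 2 else if adj k l then -1 else 0)"

definition ip :: "nat \<Rightarrow> (nat \<Rightarrow> nat \<Rightarrow> bool) \<Rightarrow> (nat \<Rightarrow> int) \<Rightarrow> (nat \<Rightarrow> int) \<Rightarrow> int" where
  "ip n adj x y = (\<Sum>k\<in>nodes n. \<Sum>l\<in>nodes n. x k * y l * cartan adj k l)"

definition sref :: "nat \<Rightarrow> (nat \<Rightarrow> nat \<Rightarrow> bool) \<Rightarrow> nat \<Rightarrow> (nat \<Rightarrow> int) \<Rightarrow> (nat \<Rightarrow> int)" where
  "sref n adj i x = x - (\<lambda>k. ip n adj (alpha i) x * alpha i k)"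

text \<open>Weyl group: generated by the simple reflections (they are involutions, so the
  monoid generated equals the group generated).\<close>
inductive_set weyl :: "nat \<Rightarrow> (nat \<Rightarrow> nat \<Rightarrow> bool) \<Rightarrow> ((nat \<Rightarrow> int) \<Rightarrow> (nat \<Rightarrow> int)) set"
  for n adj where
  weyl_id: "id \<in> weyl n adj"
| weyl_step: "w \<in> weyl n adj \<Longrightarrow> i \<in> nodes n \<Longrightarrow> sref n adj i \<circ> w \<in> weyl n adj"

definition spherical :: "nat \<Rightarrow> (nat \<Rightarrow> nat \<Rightarrow> bool) \<Rightarrow> bool" where
  "spherical n adj \<longleftrightarrow> finite (weyl n adj)"

definition roots :: "nat \<Rightarrow> (nat \<Rightarrow> nat \<Rightarrow> bool) \<Rightarrow> (nat \<Rightarrow> int) set" where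
  "roots n adj = {w (alpha i) | w i. w \<in> weyl n adj \<and> i \<in> nodes n}"

definition pos_roots :: "nat \<Rightarrow> (nat \<Rightarrow> nat \<Rightarrow> bool) \<Rightarrow> (nat \<Rightarrow> int) set" where
  "pos_roots n adj = {x \<in> roots n adj. \<forall>k. 0 \<le> x k}"

definition ht :: "nat \<Rightarrow> (nat \<Rightarrow> int) \<Rightarrow> int" where
  "ht n x = (\<Sum>k\<in>nodes n. x k)"

definition act :: "nat \<Rightarrow> (nat \<Rightarrow> nat \<Rightarrow> bool) \<Rightarrow> ((nat \<Rightarrow> int) \<Rightarrow> (nat \<Rightarrow> int))
    \<Rightarrow> (nat \<Rightarrow> int) set \<Rightarrow> (nat \<Rightarrow> int) set" where
  "act n adj w B = pos_roots n adj \<inter> {v. \<exists>\<beta>\<in>B. v = w \<beta> \<or> v = - w \<beta>}"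

definition orth_pos_set :: "nat \<Rightarrow> (nat \<Rightarrow> nat \<Rightarrow> bool) \<Rightarrow> (nat \<Rightarrow> int) set \<Rightarrow> bool" where
  "orth_pos_set n adj B \<longleftrightarrow> B \<subseteq> pos_roots n adj \<and>
     (\<forall>\<beta>\<in>B. \<forall>\<gamma>\<in>B. \<beta> \<noteq> \<gamma> \<longrightarrow> ip n adj \<beta> \<gamma> = 0)"

definition is_orbit :: "nat \<Rightarrow> (nat \<Rightarrow> nat \<Rightarrow> bool) \<Rightarrow> (nat \<Rightarrow> int) set set \<Rightarrow> bool" where
  "is_orbit n adj \<B> \<longleftrightarrow> (\<exists>B0. orth_pos_set n adj B0 \<and> \<B> = (\<lambda>w. act n adj w B0) ` weyl n adj)"

text \<open>i \<not>\<sim> j means: not (distinct and adjacent), i.e. \<not> adj i j (includes i = j).\<close>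
definition admissible :: "nat \<Rightarrow> (nat \<Rightarrow> nat \<Rightarrow> bool) \<Rightarrow> (nat \<Rightarrow> int) set set \<Rightarrow> bool" where
  "admissible n adj \<B> \<longleftrightarrow> is_orbit n adj \<B> \<and>
     (\<forall>B\<in>\<B>. \<forall>i\<in>nodes n. \<forall>j\<in>nodes n. \<forall>\<gamma>. \<not> adj i j \<and> \<gamma> \<in> B \<and> \<gamma> - alpha i + alpha j \<in> B
        \<longrightarrow> act n adj (sref n adj i) B = act n adj (sref n adj j) B)"

definition prec :: "nat \<Rightarrow> (nat \<Rightarrow> int) set \<Rightarrow> (nat \<Rightarrow> int) set \<Rightarrow> bool" where
  "prec n B C \<longleftrightarrow> B \<noteq> C \<and> Min (ht n ` (B - C)) < Min (ht n ` (C - B))"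

definition mless :: "nat \<Rightarrow> (nat \<Rightarrow> nat \<Rightarrow> bool) \<Rightarrow> (nat \<Rightarrow> int) set set
    \<Rightarrow> ((nat \<Rightarrow> int) set \<times> (nat \<Rightarrow> int) set) set" where
  "mless n adj \<B> = {(B, act n adj (sref n adj j) B) | B j.
      B \<in> \<B> \<and> j \<in> nodes n \<and> prec n B (act n adj (sref n adj j) B)}\<^sup>+"

end

theory Submission
  imports Defs Complex_Main
begin

text \<open>
  Summing the standard dot product over the finite Weyl group gives a \<open>W\<close>-invariant
  positive form \<open>Q\<close>. Invariance under \<open>r\<^sub>i\<close> gives
  \<open>2 Q(x, \<alpha>\<^sub>i) = \<langle>\<alpha>\<^sub>i, x\<rangle> Q(\<alpha>\<^sub>i, \<alpha>\<^sub>i)\<close>, so the Cartan matrix is a positive diagonal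
  rescaling of the Gram matrix of \<open>Q\<close> on the simple roots. Hence the root form is positive
  definite and, being even, satisfies \<open>\<langle>x, x\<rangle> \<ge> 2\<close> for \<open>x \<noteq> 0\<close>; in particular vectors of
  norm 2 are sign-coherent and distinct roots pair to at most 1.

  From \<open>r\<^sub>iB < B\<close> we get \<open>d \<in> B\<close> with \<open>\<langle>\<alpha>\<^sub>i, d\<rangle> = 1\<close> of minimal height in
  \<open>B - r\<^sub>iB\<close>, and likewise \<open>a\<close> for \<open>j\<close>. If \<open>\<alpha>\<^sub>i + \<alpha>\<^sub>j \<notin> B\<close>, the hypothesis \<open>r\<^sub>ir\<^sub>jB = r\<^sub>jB\<close> forces
  \<open>\<langle>\<alpha>\<^sub>i + \<alpha>\<^sub>j, x\<rangle> = 0\<close> on \<open>B\<close>; then \<open>a \<notin> r\<^sub>iB\<close> and \<open>d \<notin> r\<^sub>jB\<close>, so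
  \<open>d\<close> and \<open>a\<close> have equal height, and \<open>d - a - \<alpha>\<^sub>i\<close> would be a negative simple
  root pairing to \<open>-1\<close> with \<open>\<alpha>\<^sub>j\<close>, which no Cartan entry allows.
\<close>

lemma even_double_sum_minus_diagonal:
  fixes f :: "'b \<Rightarrow> 'b \<Rightarrow> 'a::ring_parity"
  assumes "finite A" and "\<And>k l. f k l = f l k"
  shows "even ((\<Sum>k\<in>A. \<Sum>l\<in>A. f k l) - (\<Sum>k\<in>A. f k k))"
  using assms(1)
proof (induction A rule: finite_induct)
  case (insert x F)
  have "(\<Sum>k\<in>F. f k x) = (\<Sum>l\<in>F. f x l)"
    by (rule sum.cong[OF refl]) (rule assms(2))
  then have "(\<Sum>k\<in>insert x F. \<Sum>l\<in>insert x F. f k l) - (\<Sum>k\<in>insert x F. f k k)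
      = ((\<Sum>k\<in>F. \<Sum>l\<in>F. f k l) - (\<Sum>k\<in>F. f k k)) + 2 * (\<Sum>l\<in>F. f x l)"
    using insert.hyps by (simp add: sum.distrib)
  then show ?case using insert.IH by simp
qed simp

lemma sum_nonneg_eq_1_imp_indicator:
  fixes s :: "'a \<Rightarrow> int"
  assumes "finite A" and "\<forall>k\<in>A. 0 \<le> s k" and "(\<Sum>k\<in>A. s k) = 1"
  obtains k where "k \<in> A" and "\<forall>l\<in>A. s l = (if l = k then 1 else 0)"
proof -
  obtain k where k: "k \<in> A" "s k > 0"
    using assms(2,3) by (metis not_less order.antisym sum.neutral zero_neq_one)
  have "s k \<le> 1" using member_le_sum[of k A s] k assms by auto
  then have sk: "s k = 1" using k by simp
  have "(\<Sum>l\<in>A - {k}. s l) = 0" using sum.remove[OF assms(1) k(1), of s] assms(3) sk by simp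
  then have "\<forall>l\<in>A - {k}. s l = 0" using sum_nonneg_eq_0_iff[of "A - {k}" s] assms by auto
  then show ?thesis using that k sk by auto
qed

lemma sum_swap_outer_pairs:
  "(\<Sum>k\<in>K. \<Sum>l\<in>L. \<Sum>v\<in>V. \<Sum>m\<in>M. f k l v m)
     = (\<Sum>v\<in>V. \<Sum>m\<in>M. \<Sum>k\<in>K. \<Sum>l\<in>L. (f k l v m :: 'a::comm_monoid_add))"
proof -
  have "(\<Sum>k\<in>K. \<Sum>l\<in>L. \<Sum>v\<in>V. \<Sum>m\<in>M. f k l v m) = (\<Sum>k\<in>K. \<Sum>v\<in>V. \<Sum>m\<in>M. \<Sum>l\<in>L. f k l v m)"
    by (rule sum.cong[OF refl], subst sum.swap, rule sum.cong[OF refl], rule sum.swap)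
  also have "\<dots> = (\<Sum>v\<in>V. \<Sum>m\<in>M. \<Sum>k\<in>K. \<Sum>l\<in>L. f k l v m)"
    by (subst sum.swap, rule sum.cong[OF refl], rule sum.swap)
  finally show ?thesis .
qed

locale simply_laced =
  fixes n :: nat and adj :: "nat \<Rightarrow> nat \<Rightarrow> bool"
  assumes diagram: "diagram n adj"
begin

abbreviation N :: "nat set" where "N \<equiv> nodes n"
abbreviation W where "W \<equiv> weyl n adj"
abbreviation sr :: "nat \<Rightarrow> (nat \<Rightarrow> int) \<Rightarrow> nat \<Rightarrow> int" where "sr \<equiv> sref n adj"
abbreviation form :: "(nat \<Rightarrow> int) \<Rightarrow> (nat \<Rightarrow> int) \<Rightarrow> int" (\<open>\<langle>_,/ _\<rangle>\<close>)
  where "\<langle>x, y\<rangle> \<equiv> ip n adj x y"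
abbreviation Roots where "Roots \<equiv> roots n adj"
abbreviation Pos where "Pos \<equiv> pos_roots n adj"

lemma finite_nodes [simp]: "finite N"
  by (simp add: nodes_def)

lemma adj_sym: "adj i j \<Longrightarrow> adj j i"
  using diagram by (auto simp: diagram_def)

lemma adj_irrefl [simp]: "\<not> adj i i"
  using diagram by (auto simp: diagram_def)

lemma adj_nodes: "adj i j \<Longrightarrow> i \<in> N \<and> j \<in> N"
  using diagram by (auto simp: diagram_def)

lemma cartan_sym: "cartan adj k l = cartan adj l k"
  using adj_sym by (auto simp: cartan_def)

lemma cartan_adj: "adj i j \<Longrightarrow> cartan adj i j = -1"
  by (auto simp: cartan_def)

lemma form_commute: "\<langle>x, y\<rangle> = \<langle>y, x\<rangle>"
  unfolding ip_def by (subst sum.swap) (simp add: cartan_sym mult_ac)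

lemma form_lincomb_right: "\<langle>x, \<lambda>k. y k + c * z k\<rangle> = \<langle>x, y\<rangle> + c * \<langle>x, z\<rangle>"
  unfolding ip_def by (simp add: algebra_simps sum.distrib sum_distrib_left)

lemma form_lincomb_left: "\<langle>\<lambda>k. y k + c * z k, x\<rangle> = \<langle>y, x\<rangle> + c * \<langle>z, x\<rangle>"
  using form_lincomb_right form_commute by metis

lemma form_uminus_right: "\<langle>x, - y\<rangle> = - \<langle>x, y\<rangle>"
  unfolding ip_def by (simp add: sum_negf)

lemma form_uminus_left: "\<langle>- x, y\<rangle> = - \<langle>x, y\<rangle>"
  unfolding ip_def by (simp add: sum_negf)

lemma form_smult_left: "\<langle>\<lambda>k. c * x k, y\<rangle> = c * \<langle>x, y\<rangle>"
  unfolding ip_def by (simp add: sum_distrib_left mult_ac)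

lemma form_cong: "(\<And>k. k \<in> N \<Longrightarrow> x k = x' k) \<Longrightarrow> (\<And>k. k \<in> N \<Longrightarrow> y k = y' k) \<Longrightarrow> \<langle>x, y\<rangle> = \<langle>x', y'\<rangle>"
  unfolding ip_def by (intro sum.cong refl) auto

lemma form_self_diff: "\<langle>\<lambda>k. x k - y k, \<lambda>k. x k - y k\<rangle> = \<langle>x, x\<rangle> - 2 * \<langle>x, y\<rangle> + \<langle>y, y\<rangle>"
proof -
  have "\<langle>\<lambda>k. x k + (-1) * y k, \<lambda>k. x k + (-1) * y k\<rangle> = \<langle>x, x\<rangle> - 2 * \<langle>x, y\<rangle> + \<langle>y, y\<rangle>"
    unfolding form_lincomb_left form_lincomb_right using form_commute[of y x] by simp
  then show ?thesis by simp
qed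

lemma form_diff_right: "\<langle>x, \<lambda>k. y k - z k\<rangle> = \<langle>x, y\<rangle> - \<langle>x, z\<rangle>"
  using form_lincomb_right[of x y "-1" z] by simp

lemma form_alpha_left:
  assumes i: "i \<in> N"
  shows "\<langle>alpha i, y\<rangle> = (\<Sum>l\<in>N. y l * cartan adj i l)"
proof -
  have "\<And>k. (\<Sum>l\<in>N. alpha i k * y l * cartan adj k l) = (if k = i then (\<Sum>l\<in>N. y l * cartan adj i l) else 0)"
    by (simp add: alpha_def)
  then have "\<langle>alpha i, y\<rangle> = (\<Sum>k\<in>N. if k = i then (\<Sum>l\<in>N. y l * cartan adj i l) else 0)"
    unfolding ip_def by presburger
  also have "\<dots> = (\<Sum>l\<in>N. y l * cartan adj i l)" using i by (simp add: sum.delta)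
  finally show ?thesis .
qed

lemma form_alpha_alpha:
  assumes "i \<in> N" and "k \<in> N"
  shows "\<langle>alpha i, alpha k\<rangle> = cartan adj i k"
proof -
  have "\<And>l. alpha k l * cartan adj i l = (if l = k then cartan adj i k else 0)"
    by (simp add: alpha_def)
  with assms show ?thesis by (simp add: form_alpha_left sum.delta)
qed

lemma form_self_even: "even \<langle>x, x\<rangle>"
proof -
  have "even (\<langle>x, x\<rangle> - (\<Sum>k\<in>N. x k * x k * cartan adj k k))"
    unfolding ip_def
    by (rule even_double_sum_minus_diagonal) (simp_all add: cartan_sym mult_ac)
  moreover have "even (\<Sum>k\<in>N. x k * x k * cartan adj k k)"
    by (intro dvd_sum) (simp add: cartan_def)
  ultimately show ?thesis by (metis diff_add_cancel even_add)
qed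

lemma sref_apply: "sr i x k = x k - \<langle>alpha i, x\<rangle> * alpha i k"
  by (simp add: sref_def)

lemma sref_lincomb_form: "sr i x = (\<lambda>k. x k + (- \<langle>alpha i, x\<rangle>) * alpha i k)"
  by (auto simp: sref_apply)

lemma sref_alpha_self: "i \<in> N \<Longrightarrow> sr i (alpha i) = - alpha i"
  by (auto simp: sref_apply form_alpha_alpha cartan_def)

lemma sref_alpha_adj: "adj i j \<Longrightarrow> sr j (alpha i) = alpha i + alpha j"
  using adj_sym[of i j] adj_nodes[of i j]
  by (auto simp: sref_apply form_alpha_alpha cartan_def fun_eq_iff)

lemma sref_involutive:
  assumes i: "i \<in> N"
  shows "sr i (sr i x) = x"
proof -
  have "\<langle>alpha i, sr i x\<rangle> = \<langle>alpha i, x\<rangle> + (- \<langle>alpha i, x\<rangle>) * \<langle>alpha i, alpha i\<rangle>"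
    unfolding sref_lincomb_form form_lincomb_right ..
  then have "\<langle>alpha i, sr i x\<rangle> = - \<langle>alpha i, x\<rangle>"
    by (simp add: form_alpha_alpha[OF i i] cartan_def)
  then show ?thesis by (auto simp: sref_apply)
qed

lemma sref_form: "i \<in> N \<Longrightarrow> \<langle>sr i x, sr i y\<rangle> = \<langle>x, y\<rangle>"
  unfolding sref_lincomb_form form_lincomb_left form_lincomb_right
  by (simp add: form_alpha_alpha cartan_def form_commute[of x "alpha i"] algebra_simps)

lemma sref_lincomb: "sr i (\<lambda>k. a * x k + b * y k) = (\<lambda>k. a * sr i x k + b * sr i y k)"
proof -
  have "\<langle>alpha i, \<lambda>k. a * x k + b * y k\<rangle> = a * \<langle>alpha i, x\<rangle> + b * \<langle>alpha i, y\<rangle>"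
    unfolding ip_def by (simp add: algebra_simps sum.distrib sum_distrib_left)
  then show ?thesis by (auto simp: sref_apply algebra_simps)
qed

lemma sref_uminus: "sr i (- x) = - sr i x"
  by (simp add: sref_apply fun_eq_iff form_uminus_right)

lemma act_sref_memE:
  assumes "x \<in> act n adj (sr i) B" and "i \<in> N"
  obtains b where "b \<in> B" and "sr i x = b \<or> sr i x = - b"
proof -
  obtain b where "b \<in> B" "x = sr i b \<or> x = - sr i b" using assms(1) unfolding act_def by auto
  then show ?thesis using that sref_involutive[OF assms(2)] sref_uminus by metis
qed

lemma sref_in_weyl: "i \<in> N \<Longrightarrow> sr i \<in> W"
  using weyl.weyl_step[OF weyl.weyl_id] by fastforce

lemma weyl_comp: "w \<in> W \<Longrightarrow> v \<in> W \<Longrightarrow> w \<circ> v \<in> W"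
  by (induction rule: weyl.induct) (auto simp: comp_assoc intro: weyl.intros)

lemma weyl_lincomb: "w \<in> W \<Longrightarrow> w (\<lambda>k. a * x k + b * y k) = (\<lambda>k. a * w x k + b * w y k)"
  by (induction arbitrary: x y rule: weyl.induct) (auto simp: sref_lincomb)

lemma weyl_add_smult: "w \<in> W \<Longrightarrow> w (\<lambda>k. x k + c * y k) = (\<lambda>k. w x k + c * w y k)"
  using weyl_lincomb[of w 1 x c y] by simp

lemma weyl_uminus: "w \<in> W \<Longrightarrow> w (- x) = - w x"
proof -
  have "- x = (\<lambda>k. (-1) * x k + 0 * x k)" by auto
  then show "w \<in> W \<Longrightarrow> ?thesis" using weyl_lincomb[of w "-1" x 0 x] by auto
qed

lemma weyl_form: "w \<in> W \<Longrightarrow> \<langle>w x, w y\<rangle> = \<langle>x, y\<rangle>"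
  by (induction arbitrary: x y rule: weyl.induct) (auto simp: sref_form)

lemma weyl_inj: "w \<in> W \<Longrightarrow> inj w"
proof (induction rule: weyl.induct)
  case (weyl_step w i)
  then have "inj (sr i)" by (metis injI sref_involutive)
  then show ?case using weyl_step inj_compose by blast
qed simp

lemma weyl_support: "w \<in> W \<Longrightarrow> (\<And>k. k \<notin> N \<Longrightarrow> x k = 0) \<Longrightarrow> k \<notin> N \<Longrightarrow> w x k = 0"
  by (induction arbitrary: k rule: weyl.induct) (auto simp: sref_apply alpha_def)

lemma rootsE:
  assumes "r \<in> Roots"
  obtains w i where "w \<in> W" and "i \<in> N" and "r = w (alpha i)"
  using assms unfolding roots_def by auto

lemma alpha_in_roots: "i \<in> N \<Longrightarrow> alpha i \<in> Roots"
  unfolding roots_def using weyl.weyl_id by (metis (mono_tags, lifting) id_apply mem_Collect_eq)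

lemma weyl_root: "r \<in> Roots \<Longrightarrow> w \<in> W \<Longrightarrow> w r \<in> Roots"
proof (elim rootsE)
  fix v i assume "w \<in> W" "v \<in> W" "i \<in> N" "r = v (alpha i)"
  moreover have "w r = (w \<circ> v) (alpha i)" using calculation by simp
  ultimately show ?thesis unfolding roots_def using weyl_comp by blast
qed

lemma uminus_root: "r \<in> Roots \<Longrightarrow> - r \<in> Roots"
proof (elim rootsE)
  fix v i assume v: "v \<in> W" "i \<in> N" "r = v (alpha i)"
  then have "- r = (v \<circ> sr i) (alpha i)" by (simp add: sref_alpha_self weyl_uminus fun_eq_iff)
  then show ?thesis unfolding roots_def using v weyl_comp sref_in_weyl by blast
qed

lemma root_support: "r \<in> Roots \<Longrightarrow> k \<notin> N \<Longrightarrow> r k = 0"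
proof (elim rootsE)
  fix w i assume "k \<notin> N" "w \<in> W" "i \<in> N" "r = w (alpha i)"
  moreover have "\<And>k. k \<notin> N \<Longrightarrow> alpha i k = 0" using calculation by (auto simp: alpha_def)
  ultimately show ?thesis using weyl_support by blast
qed

lemma root_form_self: "r \<in> Roots \<Longrightarrow> \<langle>r, r\<rangle> = 2"
  by (elim rootsE) (simp add: weyl_form form_alpha_alpha cartan_def)

lemma pos_root_uminus: "r \<in> Pos \<Longrightarrow> - r \<notin> Pos"
proof
  assume r: "r \<in> Pos" and m: "- r \<in> Pos"
  then have "r \<in> Roots" "\<forall>k. r k = 0" by (auto simp: pos_roots_def intro: order.antisym)
  then show False using root_form_self[of r] by (simp add: ip_def)
qed

lemma pos_roots_subset_roots: "Pos \<subseteq> Roots"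
  by (auto simp: pos_roots_def)

lemma alpha_in_pos_roots: "i \<in> N \<Longrightarrow> alpha i \<in> Pos"
  using alpha_in_roots by (auto simp: pos_roots_def alpha_def)

lemma uminus_alpha_notin_pos_roots: "- alpha i \<notin> Pos"
  by (auto simp: pos_roots_def alpha_def)

lemma ht_lincomb: "ht n (\<lambda>k. x k + c * y k) = ht n x + c * ht n y"
  unfolding ht_def by (simp add: sum.distrib sum_distrib_left)

lemma ht_diff: "ht n (\<lambda>k. x k - y k) = ht n x - ht n y"
  using ht_lincomb[of x "-1" y] by simp

lemma ht_alpha: "i \<in> N \<Longrightarrow> ht n (alpha i) = 1"
  unfolding ht_def alpha_def by simp

lemma ht_sref: "i \<in> N \<Longrightarrow> ht n (sr i x) = ht n x - \<langle>alpha i, x\<rangle>"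
  unfolding sref_lincomb_form ht_lincomb ht_alpha by simp

end

locale spherical_diagram = simply_laced +
  assumes spherical: "spherical n adj"
begin

lemma finite_weyl: "finite W"
  using spherical by (simp add: spherical_def)

definition invariant_form :: "(nat \<Rightarrow> int) \<Rightarrow> (nat \<Rightarrow> int) \<Rightarrow> int" where
  "invariant_form x y = (\<Sum>w\<in>W. \<Sum>m\<in>N. w x m * w y m)"

lemma invariant_form_commute: "invariant_form x y = invariant_form y x"
  unfolding invariant_form_def by (simp add: mult.commute)

lemma invariant_form_lincomb_left: "invariant_form (\<lambda>k. x k + c * y k) z = invariant_form x z + c * invariant_form y z"
  unfolding invariant_form_def
  by (simp add: weyl_add_smult algebra_simps sum.distrib sum_distrib_left cong: sum.cong)

lemma invariant_form_uminus_right: "invariant_form x (- y) = - invariant_form x y"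
  unfolding invariant_form_def by (simp add: weyl_uminus sum_negf cong: sum.cong)

lemma invariant_form_sref:
  assumes i: "i \<in> N"
  shows "invariant_form (sr i x) (sr i y) = invariant_form x y"
proof -
  have inv: "\<forall>w\<in>W. w \<circ> sr i \<circ> sr i = w" by (simp add: fun_eq_iff sref_involutive[OF i])
  have closed: "(\<lambda>w. w \<circ> sr i) ` W \<subseteq> W" using weyl_comp sref_in_weyl[OF i] by blast
  have bij: "bij_betw (\<lambda>w. w \<circ> sr i) W W" by (rule bij_betw_byWitness[OF inv inv closed closed])
  then show ?thesis
    unfolding invariant_form_def using sum.reindex_bij_betw[OF bij, of "\<lambda>w. \<Sum>m\<in>N. w x m * w y m"] by simp
qed

lemma invariant_form_alpha_right:
  assumes i: "i \<in> N"
  shows "2 * invariant_form x (alpha i) = \<langle>alpha i, x\<rangle> * invariant_form (alpha i) (alpha i)"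
proof -
  have "invariant_form (sr i x) (- alpha i) = invariant_form x (alpha i)"
    using invariant_form_sref[OF i, of x "alpha i"] by (simp add: sref_alpha_self[OF i])
  then show ?thesis
    unfolding sref_lincomb_form invariant_form_uminus_right invariant_form_lincomb_left by (simp add: algebra_simps)
qed

lemma invariant_form_alpha_self_pos:
  assumes i: "i \<in> N"
  shows "invariant_form (alpha i) (alpha i) > 0"
proof -
  have "(\<Sum>m\<in>N. id (alpha i) m * id (alpha i) m) \<le> invariant_form (alpha i) (alpha i)"
    unfolding invariant_form_def using finite_weyl weyl.weyl_id[of n adj, unfolded id_def]
    by (intro member_le_sum) (auto intro!: sum_nonneg)
  moreover have "(\<Sum>m\<in>N. id (alpha i) m * id (alpha i) m) = 1"
    using i by (simp add: alpha_def if_distrib cong: if_cong)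
  ultimately show ?thesis by simp
qed

lemma cartan_eq_scaled_invariant_form:
  obtains \<mu> :: "nat \<Rightarrow> real" where "\<And>k. k \<in> N \<Longrightarrow> \<mu> k > 0"
    and "\<And>k l. k \<in> N \<Longrightarrow> l \<in> N \<Longrightarrow> cartan adj k l = \<mu> k * \<mu> l * invariant_form (alpha k) (alpha l)"
proof -
  define q where "q k l = real_of_int (invariant_form (alpha k) (alpha l))" for k l
  have q_pos: "k \<in> N \<Longrightarrow> q k k > 0" for k
    using invariant_form_alpha_self_pos by (simp add: q_def)
  have q_alpha: "2 * q k l = cartan adj k l * q l l" if "k \<in> N" "l \<in> N" for k l
  proof -
    have "2 * invariant_form (alpha k) (alpha l) = cartan adj k l * invariant_form (alpha l) (alpha l)"
      using invariant_form_alpha_right[OF that(2)] that by (simp add: form_alpha_alpha cartan_sym)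
    then show ?thesis unfolding q_def by (metis of_int_mult of_int_numeral)
  qed
  define \<mu> where "\<mu> k = sqrt (2 / q k k)" for k
  have "cartan adj k l = \<mu> k * \<mu> l * q k l" if kl: "k \<in> N" "l \<in> N" for k l
  proof (cases "q k l = 0")
    case True
    then show ?thesis using q_alpha[OF kl] q_pos[OF kl(2)] by simp
  next
    case False
    then have "cartan adj k l \<noteq> 0" using q_alpha[OF kl] by auto
    moreover have "cartan adj k l * q l l = cartan adj k l * q k k"
      using q_alpha[OF kl] q_alpha[OF kl(2) kl(1)] cartan_sym[of k l]
      by (metis q_def invariant_form_commute)
    ultimately have q_eq: "q l l = q k k" by simp
    have "\<mu> k * \<mu> l * q k k = 2"
      unfolding \<mu>_def q_eq using q_pos[OF kl(1)] by (simp add: real_sqrt_mult[symmetric])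
    then have "\<mu> k * \<mu> l * q k l * q k k = 2 * q k l"
      by (metis mult.commute mult.left_commute)
    then have "\<mu> k * \<mu> l * q k l * q k k = cartan adj k l * q k k"
      using q_alpha[OF kl] q_eq by simp
    then show ?thesis using q_pos[OF kl(1)] by simp
  qed
  moreover have "\<mu> k > 0" if "k \<in> N" for k
    using q_pos[OF that] by (simp add: \<mu>_def)
  ultimately show ?thesis using that unfolding q_def by blast
qed

lemma invariant_form_sum_squares:
  fixes y :: "nat \<Rightarrow> real"
  shows "(\<Sum>k\<in>N. \<Sum>l\<in>N. y k * y l * invariant_form (alpha k) (alpha l))
       = (\<Sum>w\<in>W. \<Sum>m\<in>N. (\<Sum>k\<in>N. y k * w (alpha k) m)\<^sup>2)"
proof -
  have "(\<Sum>k\<in>N. \<Sum>l\<in>N. y k * y l * invariant_form (alpha k) (alpha l))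
      = (\<Sum>k\<in>N. \<Sum>l\<in>N. \<Sum>w\<in>W. \<Sum>m\<in>N. y k * y l * (w (alpha k) m * w (alpha l) m))"
    by (simp add: invariant_form_def sum_distrib_left)
  also have "\<dots> = (\<Sum>w\<in>W. \<Sum>m\<in>N. \<Sum>k\<in>N. \<Sum>l\<in>N. y k * y l * (w (alpha k) m * w (alpha l) m))"
    by (rule sum_swap_outer_pairs)
  also have "\<dots> = (\<Sum>w\<in>W. \<Sum>m\<in>N. (\<Sum>k\<in>N. y k * w (alpha k) m)\<^sup>2)"
    by (simp add: power2_eq_square sum_product mult_ac)
  finally show ?thesis .
qed

lemma form_self_pos:
  assumes k0: "k0 \<in> N" and nonzero: "x k0 \<noteq> 0"
  shows "\<langle>x, x\<rangle> > 0"
proof -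
  obtain \<mu> :: "nat \<Rightarrow> real" where \<mu>_pos: "\<And>k. k \<in> N \<Longrightarrow> \<mu> k > 0"
    and cartan_eq: "\<And>k l. k \<in> N \<Longrightarrow> l \<in> N \<Longrightarrow> cartan adj k l = \<mu> k * \<mu> l * invariant_form (alpha k) (alpha l)"
    using cartan_eq_scaled_invariant_form by blast
  define y where "y k = \<mu> k * x k" for k
  have "(y k0)\<^sup>2 \<le> (\<Sum>m\<in>N. (y m)\<^sup>2)"
    using k0 by (intro member_le_sum) auto
  also have "\<dots> = (\<Sum>m\<in>N. (\<Sum>k\<in>N. y k * id (alpha k) m)\<^sup>2)"
  proof (intro sum.cong refl)
    fix m assume "m \<in> N"
    have "\<And>k. y k * id (alpha k) m = (if k = m then y m else 0)" by (simp add: alpha_def)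
    then show "(y m)\<^sup>2 = (\<Sum>k\<in>N. y k * id (alpha k) m)\<^sup>2" using \<open>m \<in> N\<close> by (simp add: sum.delta)
  qed
  also have "\<dots> \<le> (\<Sum>w\<in>W. \<Sum>m\<in>N. (\<Sum>k\<in>N. y k * w (alpha k) m)\<^sup>2)"
    using finite_weyl weyl.weyl_id[of n adj, unfolded id_def] by (intro member_le_sum) (auto intro!: sum_nonneg)
  also have "\<dots> = (\<Sum>k\<in>N. \<Sum>l\<in>N. y k * y l * invariant_form (alpha k) (alpha l))"
    by (rule invariant_form_sum_squares[symmetric])
  also have "\<dots> = \<langle>x, x\<rangle>"
    by (simp add: ip_def cartan_eq y_def) (intro sum.cong refl; simp add: mult_ac)
  finally have "(y k0)\<^sup>2 \<le> \<langle>x, x\<rangle>" .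
  moreover have "(y k0)\<^sup>2 > 0" using \<mu>_pos[OF k0] nonzero by (simp add: y_def)
  ultimately show ?thesis by linarith
qed

lemma form_self_ge_2:
  assumes "k \<in> N" and "x k \<noteq> 0"
  shows "\<langle>x, x\<rangle> \<ge> 2"
proof -
  have "\<langle>x, x\<rangle> > 0" using assms by (rule form_self_pos)
  moreover obtain m where "\<langle>x, x\<rangle> = 2 * m" using form_self_even by (rule evenE)
  ultimately show ?thesis by presburger
qed

lemma form_self_2_sign_coherent:
  assumes "\<langle>y, y\<rangle> = 2"
  shows "(\<forall>k\<in>N. 0 \<le> y k) \<or> (\<forall>k\<in>N. y k \<le> 0)"
proof (rule ccontr)
  assume "\<not> ?thesis"
  then obtain k l where k: "k \<in> N" "y k < 0" and l: "l \<in> N" "y l > 0" by force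
  define p where "p k = max (y k) 0" for k
  define q where "q k = max (- y k) 0" for k
  have "y = (\<lambda>k. p k - q k)" by (auto simp: p_def q_def fun_eq_iff)
  then have "\<langle>y, y\<rangle> = \<langle>p, p\<rangle> - 2 * \<langle>p, q\<rangle> + \<langle>q, q\<rangle>"
    using form_self_diff by simp
  moreover have "\<langle>p, q\<rangle> \<le> 0"
    \<comment> \<open>disjoint supports: only the non-positive off-diagonal Cartan entries contribute\<close>
    unfolding ip_def
  proof (intro sum_nonpos)
    fix a b assume "a \<in> N" "b \<in> N"
    show "p a * q b * cartan adj a b \<le> 0"
    proof (cases "a = b")
      case False
      then have "cartan adj a b \<le> 0" by (simp add: cartan_def)
      moreover have "p a * q b \<ge> 0" by (simp add: p_def q_def)
      ultimately show ?thesis by (simp add: mult_nonneg_nonpos)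
    qed (simp add: p_def q_def)
  qed
  moreover have "\<langle>p, p\<rangle> \<ge> 2" using l by (intro form_self_ge_2[of l]) (auto simp: p_def)
  moreover have "\<langle>q, q\<rangle> \<ge> 2" using k by (intro form_self_ge_2[of k]) (auto simp: q_def)
  ultimately show False using assms by linarith
qed

lemma root_sign: "r \<in> Roots \<Longrightarrow> (\<forall>k. 0 \<le> r k) \<or> (\<forall>k. r k \<le> 0)"
  using form_self_2_sign_coherent[OF root_form_self] root_support by (metis order_refl)

lemma root_pos_or_neg: "r \<in> Roots \<Longrightarrow> r \<in> Pos \<or> - r \<in> Pos"
  using root_sign[of r] uminus_root[of r] by (auto simp: pos_roots_def)

lemma root_form_le_1:
  assumes r: "r \<in> Roots" and s: "s \<in> Roots" and "r \<noteq> s"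
  shows "\<langle>r, s\<rangle> \<le> 1"
proof -
  obtain k where k: "r k \<noteq> s k" using \<open>r \<noteq> s\<close> by (auto simp: fun_eq_iff)
  then have "k \<in> N" using root_support[OF r] root_support[OF s] by force
  define d where "d = (\<lambda>k. r k - s k)"
  have "\<langle>d, d\<rangle> \<ge> 2" using k \<open>k \<in> N\<close> by (intro form_self_ge_2[of k]) (auto simp: d_def)
  moreover have "\<langle>d, d\<rangle> = \<langle>r, r\<rangle> - 2 * \<langle>r, s\<rangle> + \<langle>s, s\<rangle>"
    unfolding d_def by (rule form_self_diff)
  ultimately show ?thesis using root_form_self[OF r] root_form_self[OF s] by simp
qed

lemma root_form_ge_neg_1: "r \<in> Roots \<Longrightarrow> s \<in> Roots \<Longrightarrow> r \<noteq> - s \<Longrightarrow> \<langle>r, s\<rangle> \<ge> -1"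
  using root_form_le_1[of r "- s"] uminus_root[of s] form_uminus_right[of r s] by simp

lemma sref_pos_root:
  assumes b: "b \<in> Pos" and i: "i \<in> N" and "b \<noteq> alpha i"
  shows "sr i b \<in> Pos"
proof -
  have b_root: "b \<in> Roots" and b_nonneg: "\<And>k. 0 \<le> b k" using b by (auto simp: pos_roots_def)
  have "\<exists>k. k \<noteq> i \<and> b k > 0"
  proof (rule ccontr)
    assume "\<not> ?thesis"
    then have "b = (\<lambda>k. b i * alpha i k)"
      using b_nonneg by (auto simp: alpha_def fun_eq_iff order.order_iff_strict)
    then have "\<langle>b, b\<rangle> = b i * b i * 2"
      using form_smult_left[of "b i" "alpha i"] form_commute[of "alpha i"]
      by (metis (no_types) form_alpha_alpha[OF i i] cartan_def mult.assoc)
    then have "b i = 1" using root_form_self[OF b_root] b_nonneg[of i] zmult_eq_1_iff[of "b i" "b i"] by auto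
    then show False using \<open>b = (\<lambda>k. b i * alpha i k)\<close> \<open>b \<noteq> alpha i\<close> by (simp add: fun_eq_iff)
  qed
  then obtain k where "k \<noteq> i" "b k > 0" by auto
  then have "sr i b k > 0" by (simp add: sref_apply alpha_def)
  then have "\<forall>k. 0 \<le> sr i b k"
    using root_sign[OF weyl_root[OF b_root sref_in_weyl[OF i]]] by (meson linorder_not_le)
  then show ?thesis using weyl_root[OF b_root sref_in_weyl[OF i]] by (simp add: pos_roots_def)
qed

lemma finite_roots: "finite Roots"
proof -
  have "Roots = (\<lambda>(w, i). w (alpha i)) ` (W \<times> N)" unfolding roots_def by auto
  then show ?thesis using finite_weyl by simp
qed

lemma form_self_2_height_neg_1:
  assumes "\<langle>r, r\<rangle> = 2" and "ht n r = -1"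
  obtains k where "k \<in> N" and "\<forall>l\<in>N. r l = - alpha k l"
proof -
  have "\<not> (\<forall>k\<in>N. 0 \<le> r k)"
    using assms(2) sum_nonneg[of N r] by (auto simp: ht_def)
  then have "\<forall>k\<in>N. 0 \<le> - r k"
    using form_self_2_sign_coherent[OF assms(1)] by auto
  moreover have "(\<Sum>k\<in>N. - r k) = 1"
    using assms(2) by (simp add: ht_def sum_negf)
  ultimately obtain k where "k \<in> N" "\<forall>l\<in>N. - r l = (if l = k then 1 else 0)"
    using sum_nonneg_eq_1_imp_indicator[of N "\<lambda>k. - r k"] by auto
  moreover from this(2) have "\<forall>l\<in>N. r l = - alpha k l"
    unfolding alpha_def by (metis minus_minus)
  ultimately show ?thesis using that by blast
qed

lemma no_orthogonal_roots_of_equal_height: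
  assumes d_root: "d \<in> Roots" and a_root: "a \<in> Roots" and "\<langle>d, a\<rangle> = 0" and "ht n d = ht n a"
    and ij: "adj i j" and "\<langle>alpha i, d\<rangle> = 1" and "\<langle>alpha i, a\<rangle> = -1"
    and "\<langle>alpha j, d\<rangle> = -1" and "\<langle>alpha j, a\<rangle> = 1"
  shows False
proof -
  have i: "i \<in> N" and j: "j \<in> N" using adj_nodes[OF ij] by auto
  define e where "e = (\<lambda>k. d k - a k)"
  define r where "r = (\<lambda>k. e k - alpha i k)"
  have "\<langle>e, e\<rangle> = 4"
    using assms(3) root_form_self[OF d_root] root_form_self[OF a_root]
    unfolding e_def form_self_diff by simp
  moreover have "\<langle>e, alpha i\<rangle> = 2"
    using assms(6,7) form_commute[of e] unfolding e_def form_diff_right by simp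
  ultimately have "\<langle>r, r\<rangle> = 2"
    unfolding r_def form_self_diff using form_alpha_alpha[OF i i] by (simp add: cartan_def)
  moreover have "ht n r = -1"
    unfolding r_def e_def ht_diff using assms(4) ht_alpha[OF i] by simp
  ultimately obtain k where k: "k \<in> N" "\<forall>l\<in>N. r l = - alpha k l"
    by (rule form_self_2_height_neg_1)
  have "\<langle>alpha j, r\<rangle> = \<langle>alpha j, - alpha k\<rangle>"
    using k(2) by (intro form_cong) auto
  then have "\<langle>alpha j, r\<rangle> = - cartan adj j k"
    by (simp add: form_uminus_right form_alpha_alpha[OF j k(1)])
  moreover have "\<langle>alpha j, r\<rangle> = -1"
    using assms(8,9) form_alpha_alpha[OF j i] cartan_adj[OF adj_sym[OF ij]]
    unfolding r_def e_def form_diff_right by simp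
  ultimately show False by (auto simp: cartan_def split: if_splits)
qed

lemma act_act:
  assumes v: "v \<in> W" and w: "w \<in> W" and B: "B \<subseteq> Roots"
  shows "act n adj v (act n adj w B) = act n adj (v \<circ> w) B"
proof (intro set_eqI iffI)
  fix x assume "x \<in> act n adj v (act n adj w B)"
  then obtain b' b where x: "x \<in> Pos" "x = v b' \<or> x = - v b'"
    and b: "b \<in> B" "b' = w b \<or> b' = - w b"
    unfolding act_def by auto
  then have "x = v (w b) \<or> x = - v (w b)" by (auto simp: weyl_uminus[OF v])
  then show "x \<in> act n adj (v \<circ> w) B" using x b unfolding act_def by auto
next
  fix x assume "x \<in> act n adj (v \<circ> w) B"
  then obtain b where x: "x \<in> Pos" "x = v (w b) \<or> x = - v (w b)" and b: "b \<in> B"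
    unfolding act_def by auto
  have "w b \<in> Pos \<or> - w b \<in> Pos" using root_pos_or_neg weyl_root b B w by blast
  then show "x \<in> act n adj v (act n adj w B)"
  proof
    assume "w b \<in> Pos"
    then have "w b \<in> act n adj w B" using b unfolding act_def by auto
    then show ?thesis using x unfolding act_def by auto
  next
    assume "- w b \<in> Pos"
    then have "- w b \<in> act n adj w B" using b unfolding act_def by auto
    moreover have "x = v (- w b) \<or> x = - v (- w b)" using x by (auto simp: weyl_uminus[OF v])
    ultimately show ?thesis using x unfolding act_def by blast
  qed
qed

end

text \<open>Unlike \<open>prec\<close>, this relation is transitive, so it survives the transitive closure in \<open>mless\<close>.\<close>

definition prec_witness :: "nat \<Rightarrow> (nat \<Rightarrow> int) set \<Rightarrow> (nat \<Rightarrow> int) set \<Rightarrow> bool" where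
  "prec_witness n B C \<longleftrightarrow> (\<exists>x\<in>B - C. \<forall>y\<in>C - B. ht n x < ht n y)"

lemma prec_witness_trans:
  assumes "prec_witness n B C" and "prec_witness n C D"
  shows "prec_witness n B D"
proof -
  obtain x where x: "x \<in> B - C" "\<forall>y\<in>C - B. ht n x < ht n y"
    using assms(1) unfolding prec_witness_def by blast
  obtain z where z: "z \<in> C - D" "\<forall>y\<in>D - C. ht n z < ht n y"
    using assms(2) unfolding prec_witness_def by blast
  show ?thesis
  proof (cases "ht n x \<le> ht n z")
    case True
    then have "x \<in> B - D" and "\<forall>y\<in>D - B. ht n x < ht n y"
      using x z by (smt (verit, best) Diff_iff)+
    then show ?thesis unfolding prec_witness_def by blast
  next
    case False
    then have "z \<in> B - D" and "\<forall>y\<in>D - B. ht n z < ht n y"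
      using x z by (smt (verit, best) Diff_iff)+
    then show ?thesis unfolding prec_witness_def by blast
  qed
qed

lemma prec_imp_prec_witness:
  assumes "finite B" and "finite C" and "B - C \<noteq> {}" and "prec n B C"
  shows "prec_witness n B C"
proof -
  obtain x where x: "x \<in> B - C" "ht n x = Min (ht n ` (B - C))"
    using Min_in[of "ht n ` (B - C)"] assms(1,3) by fastforce
  have "Min (ht n ` (C - B)) \<le> ht n y" if "y \<in> C - B" for y
    using that assms(2) by (intro Min_le) auto
  then have "\<forall>y\<in>C - B. ht n x < ht n y"
    using x assms(4) unfolding prec_def by fastforce
  then show ?thesis using x unfolding prec_witness_def by blast
qed

locale orthogonal_orbit = spherical_diagram +
  fixes B0 :: "(nat \<Rightarrow> int) set"
  assumes orth_pos_set: "orth_pos_set n adj B0"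
begin

abbreviation Orbit where "Orbit \<equiv> (\<lambda>w. act n adj w B0) ` W"
abbreviation refl_act :: "nat \<Rightarrow> (nat \<Rightarrow> int) set \<Rightarrow> (nat \<Rightarrow> int) set"
  where "refl_act i B \<equiv> act n adj (sr i) B"

lemma B0_subset_roots: "B0 \<subseteq> Roots"
  using orth_pos_set by (auto simp: orth_pos_set_def pos_roots_def)

lemma orbit_refl_act:
  assumes "B \<in> Orbit" and j: "j \<in> N"
  shows "refl_act j B \<in> Orbit"
proof -
  obtain w where w: "w \<in> W" "B = act n adj w B0" using assms(1) by auto
  then have "refl_act j B = act n adj (sr j \<circ> w) B0"
    using act_act[OF sref_in_weyl[OF j] w(1) B0_subset_roots] by simp
  moreover have "sr j \<circ> w \<in> W" using weyl_comp[OF sref_in_weyl[OF j] w(1)] .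
  ultimately show ?thesis by blast
qed

lemma orbit_subset_pos_roots: "B \<in> Orbit \<Longrightarrow> B \<subseteq> Pos"
  by (auto simp: act_def)

lemma orbit_finite: "B \<in> Orbit \<Longrightarrow> finite B"
  using orbit_subset_pos_roots pos_roots_subset_roots finite_roots by (metis finite_subset order_trans)

lemma orbit_orthogonal:
  assumes B: "B \<in> Orbit" and "b \<in> B" and "c \<in> B" and "b \<noteq> c"
  shows "\<langle>b, c\<rangle> = 0"
proof -
  obtain w where w: "w \<in> W" "B = act n adj w B0" using B by auto
  obtain b0 where b0: "b0 \<in> B0" "b = w b0 \<or> b = - w b0" using \<open>b \<in> B\<close> w unfolding act_def by auto
  obtain c0 where c0: "c0 \<in> B0" "c = w c0 \<or> c = - w c0" using \<open>c \<in> B\<close> w unfolding act_def by auto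
  show ?thesis
  proof (cases "b0 = c0")
    case True
    then have "b = - c" using b0 c0 \<open>b \<noteq> c\<close> by auto
    then show ?thesis
      using assms orbit_subset_pos_roots pos_root_uminus by blast
  next
    case False
    then have "\<langle>w b0, w c0\<rangle> = 0"
      using orth_pos_set b0 c0 weyl_form[OF w(1)] unfolding orth_pos_set_def by auto
    then show ?thesis using b0(2) c0(2) by (auto simp: form_uminus_left form_uminus_right)
  qed
qed

lemma orbit_card: assumes "B \<in> Orbit" shows "card B = card B0"
proof -
  obtain w where w: "w \<in> W" "B = act n adj w B0" using assms by auto
  define f where "f b = (if w b \<in> Pos then w b else - w b)" for b
  have "inj_on f B0"
  proof
    fix b c assume b: "b \<in> B0" and c: "c \<in> B0" and "f b = f c"
    then have "w b = w c \<or> w b = - w c"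
      by (auto simp: f_def split: if_splits) (metis minus_minus)
    then have "w b = w c \<or> w b = w (- c)" by (simp add: weyl_uminus[OF w(1)])
    then have "b = c \<or> b = - c" using weyl_inj[OF w(1)] by (auto dest: injD)
    then show "b = c"
      using b c orth_pos_set pos_root_uminus unfolding orth_pos_set_def by blast
  qed
  moreover have "f ` B0 = B"
  proof (intro set_eqI iffI)
    fix x assume "x \<in> f ` B0"
    then obtain b where b: "b \<in> B0" "x = f b" by auto
    then have "x \<in> Pos"
      using root_pos_or_neg[OF weyl_root[OF _ w(1)]] B0_subset_roots by (auto simp: f_def)
    then show "x \<in> B" using b w unfolding act_def f_def by auto
  next
    fix x assume "x \<in> B"
    then obtain b where b: "b \<in> B0" "x = w b \<or> x = - w b" "x \<in> Pos"
      using w unfolding act_def by auto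
    then have "x = f b" using pos_root_uminus by (force simp: f_def)
    then show "x \<in> f ` B0" using b by auto
  qed
  ultimately show ?thesis using card_image by blast
qed

lemma orbit_diff_nonempty: "B \<in> Orbit \<Longrightarrow> C \<in> Orbit \<Longrightarrow> B \<noteq> C \<Longrightarrow> B - C \<noteq> {}"
  using orbit_card orbit_finite by (metis Diff_eq_empty_iff card_subset_eq)

lemma mless_imp_prec_witness:
  assumes "(X, Y) \<in> mless n adj Orbit"
  shows "prec_witness n X Y"
proof -
  let ?R = "{(B, refl_act j B) | B j. B \<in> Orbit \<and> j \<in> N \<and> prec n B (refl_act j B)}"
  have cover: "prec_witness n X Y" if R: "(X, Y) \<in> ?R" for X Y
  proof -
    obtain j where j: "X \<in> Orbit" "j \<in> N" "Y = refl_act j X" "prec n X Y"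
      using R by blast
    then have "Y \<in> Orbit" and "X \<noteq> Y" using orbit_refl_act by (auto simp: prec_def)
    then show ?thesis
      using prec_imp_prec_witness[of X Y] orbit_finite[of X] orbit_finite[of Y] orbit_diff_nonempty[of X Y] j
      by simp
  qed
  have "(X, Y) \<in> ?R\<^sup>+" using assms unfolding mless_def by simp
  then show ?thesis
  proof (induction rule: trancl_induct)
    case (step Y Z)
    then show ?case using cover prec_witness_trans by blast
  qed (rule cover)
qed

lemma descent_witness:
  assumes B: "B \<in> Orbit" and i: "i \<in> N" and prec: "prec_witness n (refl_act i B) B"
  obtains d where "d \<in> B" and "\<langle>alpha i, d\<rangle> = 1" and "\<forall>v\<in>B - refl_act i B. ht n d \<le> ht n v"
proof -
  obtain u where u: "u \<in> refl_act i B - B" "\<forall>v\<in>B - refl_act i B. ht n u < ht n v"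
    using prec unfolding prec_witness_def by blast
  then obtain b where b: "b \<in> B" "u = sr i b \<or> u = - sr i b" "u \<in> Pos"
    unfolding act_def by auto
  have b_pos: "b \<in> Pos" using b(1) B orbit_subset_pos_roots by auto
  have "b \<noteq> alpha i"
  proof
    assume "b = alpha i"
    then have "u = - alpha i \<or> u = alpha i" using b(2) sref_alpha_self[OF i] by auto
    then show False using b(1,3) u(1) \<open>b = alpha i\<close> uminus_alpha_notin_pos_roots by blast
  qed
  then have sb_pos: "sr i b \<in> Pos" using sref_pos_root[OF b_pos i] by blast
  then have u_eq: "u = sr i b" using b(2,3) pos_root_uminus by metis
  have "b \<notin> refl_act i B"
  proof
    assume "b \<in> refl_act i B"
    then obtain b' where b': "b' \<in> B" "sr i b = b' \<or> sr i b = - b'"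
      using i by (rule act_sref_memE)
    from b'(2) show False
    proof
      assume "sr i b = b'"
      then show False using u_eq u(1) b'(1) by blast
    next
      assume "sr i b = - b'"
      moreover have "b' \<in> Pos" using b'(1) B orbit_subset_pos_roots by blast
      ultimately show False using sb_pos pos_root_uminus by metis
    qed
  qed
  then have "ht n u < ht n b" using u b(1) by blast
  moreover have ht_u: "ht n u = ht n b - \<langle>alpha i, b\<rangle>" using u_eq ht_sref[OF i] by simp
  moreover have "\<langle>alpha i, b\<rangle> \<le> 1"
    using root_form_le_1 alpha_in_roots[OF i] b_pos pos_roots_subset_roots \<open>b \<noteq> alpha i\<close>
    by (metis subsetD)
  ultimately have "\<langle>alpha i, b\<rangle> = 1" by linarith
  moreover have "\<forall>v\<in>B - refl_act i B. ht n b \<le> ht n v"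
    using u(2) ht_u calculation by (metis add_le_cancel_right diff_add_cancel zle_diff1_eq)
  ultimately show ?thesis using that b(1) by blast
qed

lemma form_alpha_neg_1_notin_refl_act:
  assumes B: "B \<in> Orbit" and i: "i \<in> N" and a: "a \<in> B" and ai: "\<langle>alpha i, a\<rangle> = -1"
  shows "a \<notin> refl_act i B"
proof
  assume "a \<in> refl_act i B"
  then obtain a' where a': "a' \<in> B" "sr i a = a' \<or> sr i a = - a'"
    using i by (rule act_sref_memE)
  have sa: "sr i a = (\<lambda>k. a k + 1 * alpha i k)" using ai by (simp add: sref_apply fun_eq_iff)
  have a_pos: "a \<in> Pos" using a B orbit_subset_pos_roots by auto
  have "sr i a \<in> Roots" using a_pos pos_roots_subset_roots weyl_root sref_in_weyl[OF i] by blast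
  moreover have "\<forall>k. 0 \<le> sr i a k" using a_pos sa by (auto simp: pos_roots_def alpha_def)
  ultimately have "sr i a \<in> Pos" unfolding pos_roots_def by blast
  moreover have "a' \<in> Pos" using a'(1) B orbit_subset_pos_roots by blast
  ultimately have "sr i a = a'" using a'(2) pos_root_uminus by metis
  moreover have "a' \<noteq> a" using sa calculation by (auto simp: fun_eq_iff alpha_def)
  ultimately have "\<langle>a, sr i a\<rangle> = 0" using orbit_orthogonal[OF B a a'(1)] by auto
  moreover have "\<langle>a, sr i a\<rangle> = \<langle>a, a\<rangle> + 1 * \<langle>a, alpha i\<rangle>" unfolding sa form_lincomb_right ..
  ultimately show False
    using root_form_self a_pos pos_roots_subset_roots ai form_commute[of a "alpha i"] by auto
qed

lemma refl_act_fixed_mem: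
  assumes C: "C \<in> Orbit" and i: "i \<in> N" and fixed: "refl_act i C = C" and g: "g \<in> C"
  shows "g = alpha i \<or> \<langle>alpha i, g\<rangle> = 0"
proof (rule ccontr)
  assume "\<not> ?thesis"
  then have "g \<noteq> alpha i" and nonzero: "\<langle>alpha i, g\<rangle> \<noteq> 0" by auto
  have g_pos: "g \<in> Pos" using g C orbit_subset_pos_roots by auto
  then have g_root: "g \<in> Roots" using pos_roots_subset_roots by auto
  have "alpha i \<noteq> - g" using g_pos pos_root_uminus alpha_in_pos_roots[OF i] by auto
  have "sr i g \<in> Pos" using sref_pos_root[OF g_pos i \<open>g \<noteq> alpha i\<close>] .
  then have "sr i g \<in> refl_act i C" using g unfolding act_def by auto
  then have "sr i g \<in> C" using fixed by simp
  moreover have "sr i g \<noteq> g"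
  proof
    assume "sr i g = g"
    then have "sr i g i = g i" by simp
    then show False using nonzero by (simp add: sref_apply alpha_def)
  qed
  ultimately have "\<langle>g, sr i g\<rangle> = 0" using orbit_orthogonal[OF C g] by auto
  moreover have "\<langle>g, sr i g\<rangle> = 2 - \<langle>alpha i, g\<rangle> * \<langle>alpha i, g\<rangle>"
    using root_form_self[OF g_root] form_commute[of g "alpha i"]
    unfolding sref_lincomb_form form_lincomb_right by simp
  moreover have "\<langle>alpha i, g\<rangle> \<le> 1" and "\<langle>alpha i, g\<rangle> \<ge> -1"
    using root_form_le_1[OF alpha_in_roots[OF i] g_root] root_form_ge_neg_1[OF alpha_in_roots[OF i] g_root]
      \<open>g \<noteq> alpha i\<close> \<open>alpha i \<noteq> - g\<close> by auto
  then have "\<langle>alpha i, g\<rangle> = 1 \<or> \<langle>alpha i, g\<rangle> = -1" using nonzero by linarith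
  ultimately show False by auto
qed

lemma form_alpha_adj_sum_zero:
  assumes B: "B \<in> Orbit" and ij: "adj i j"
    and fixed: "refl_act i (refl_act j B) = refl_act j B"
    and notin: "alpha i + alpha j \<notin> B" and x: "x \<in> B"
  shows "\<langle>alpha i, x\<rangle> + \<langle>alpha j, x\<rangle> = 0"
proof -
  have i: "i \<in> N" and j: "j \<in> N" using adj_nodes[OF ij] by auto
  have x_pos: "x \<in> Pos" using x B orbit_subset_pos_roots by blast
  have "sr j x \<in> Roots" using x_pos pos_roots_subset_roots weyl_root sref_in_weyl[OF j] by blast
  then obtain g where g: "g = sr j x \<or> g = - sr j x" "g \<in> Pos"
    using root_pos_or_neg by blast
  then have "g \<in> refl_act j B" unfolding act_def using x by blast
  then have "g = alpha i \<or> \<langle>alpha i, g\<rangle> = 0"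
    by (rule refl_act_fixed_mem[OF orbit_refl_act[OF B j] i fixed])
  then show ?thesis
  proof
    assume "g = alpha i"
    then have "sr j x = alpha i \<or> sr j x = - alpha i" using g(1) by auto
    then have "x = sr j (alpha i) \<or> x = - sr j (alpha i)"
      using sref_involutive[OF j] sref_uminus by metis
    moreover have "- (alpha i + alpha j) \<notin> Pos"
      by (auto simp: pos_roots_def alpha_def intro!: exI[of _ i])
    ultimately show ?thesis using x notin x_pos sref_alpha_adj[OF ij] by auto
  next
    assume "\<langle>alpha i, g\<rangle> = 0"
    then have "\<langle>sr j (alpha i), sr j (sr j x)\<rangle> = 0"
      using g(1) sref_form[OF j] by (auto simp: form_uminus_right)
    then have "\<langle>\<lambda>k. alpha i k + 1 * alpha j k, x\<rangle> = 0"
      using sref_involutive[OF j] sref_alpha_adj[OF ij] by (simp add: plus_fun_def)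
    then show ?thesis unfolding form_lincomb_left by simp
  qed
qed

lemma alpha_add_mem_of_descents:
  assumes B: "B \<in> Orbit" and ij: "adj i j"
    and fixed: "refl_act i (refl_act j B) = refl_act j B"
    and prec_i: "prec_witness n (refl_act i B) B" and prec_j: "prec_witness n (refl_act j B) B"
  shows "alpha i + alpha j \<in> B"
proof (rule ccontr)
  assume notin: "alpha i + alpha j \<notin> B"
  have i: "i \<in> N" and j: "j \<in> N" using adj_nodes[OF ij] by auto
  obtain d where d: "d \<in> B" "\<langle>alpha i, d\<rangle> = 1" "\<forall>v\<in>B - refl_act i B. ht n d \<le> ht n v"
    using descent_witness[OF B i prec_i] by blast
  obtain a where a: "a \<in> B" "\<langle>alpha j, a\<rangle> = 1" "\<forall>v\<in>B - refl_act j B. ht n a \<le> ht n v"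
    using descent_witness[OF B j prec_j] by blast
  have dj: "\<langle>alpha j, d\<rangle> = -1" and ai: "\<langle>alpha i, a\<rangle> = -1"
    using form_alpha_adj_sum_zero[OF B ij fixed notin] d(1,2) a(1,2) by (simp_all add: add_eq_0_iff)
  have "ht n d = ht n a"
    using d a form_alpha_neg_1_notin_refl_act[OF B i a(1) ai]
      form_alpha_neg_1_notin_refl_act[OF B j d(1) dj] by force
  have "d \<noteq> a" using d(2) ai by auto
  then have "\<langle>d, a\<rangle> = 0" by (rule orbit_orthogonal[OF B d(1) a(1)])
  have "d \<in> Roots" and "a \<in> Roots"
    using d(1) a(1) B orbit_subset_pos_roots pos_roots_subset_roots by blast+
  then show False
    using no_orthogonal_roots_of_equal_height \<open>\<langle>d, a\<rangle> = 0\<close> \<open>ht n d = ht n a\<close> ij d(2) a(2) ai dj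
    by blast
qed

end

theorem lemma3p2:
  fixes n :: nat and adj :: "nat \<Rightarrow> nat \<Rightarrow> bool" and \<B> :: "(nat \<Rightarrow> int) set set"
    and B :: "(nat \<Rightarrow> int) set" and i j :: nat
  assumes "diagram n adj" and "spherical n adj"
    and "admissible n adj \<B>"
    and "B \<in> \<B>"
    and "adj i j"
    and "act n adj (sref n adj i) (act n adj (sref n adj j) B) = act n adj (sref n adj j) B"
    and "(act n adj (sref n adj i) B, B) \<in> mless n adj \<B>"
    and "(act n adj (sref n adj j) B, B) \<in> mless n adj \<B>"
  shows "alpha i + alpha j \<in> B"
proof -
  obtain B0 where B0: "orth_pos_set n adj B0" and orbit: "\<B> = (\<lambda>w. act n adj w B0) ` weyl n adj"
    using assms(3) unfolding admissible_def is_orbit_def by blast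
  interpret orthogonal_orbit n adj B0
    using assms(1,2) B0 by unfold_locales
  show ?thesis
    using alpha_add_mem_of_descents assms(4-8) mless_imp_prec_witness unfolding orbit by blast
qed

end
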